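(* Let $\mathcal C$ be a category of noncrossing $\{x,y\}$-coloured partitions ($x^{-1}=x$, $y^{-1}=y$) all of whose blocks have even size, and which contains a partition with a block of size at least four. If no block of any partition in $\mathcal C$ contains points of both colours, then $\mathcal C$ is a free product.
   Context: Colour sets and partitions: a colour set is a set $\mathcal A$ with an involution $a\mapsto a^{-1}$. For words $w,w'$ on $\mathcal A$, an element of $P^{\mathcal A}(w,w')$ is a partition of $|w|+|w'|$ points drawn as an upper row coloured (left to right) by $w$ and a lower row coloured by $w'$; its subsets are blocks. It is noncrossing if there are no four points $k_1<k_2<k_3<k_4$ (ordering: upper row left to right, then lower row right to left) with $k_1,k_3$ in one block and $k_2,k_4$ in a different block. Category operations: tensor product, composition (erasing middle points and closed loops), adjoint (reflection), rotation (moving an extreme point to the other row and replacing its colour $a$ by $a^{-1}$). A category of noncrossing partitions is a family $\mathcal C(w,w')\subset NC^{\mathcal A}(w,w')$ stable under these operations and containing $\pi(a,a)$ for all $a$. For a category $\mathcal C$ on $\{x,y\}$, $\mathcal C_x$ (resp. $\mathcal C_y$) is the set of partitions in $\mathcal C$ all of whose points are coloured $x$ (resp. $y$); $\mathcal C$ is a free product if it equals the category generated by $\mathcal C_x\cup\mathcal C_y$. *)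

theory Defs
  imports Main
begin

text \<open>Points of a partition: upper row points Up i (i < length of upper word, left to right)
  and lower row points Lo j (j < length of lower word, left to right).\<close>

datatype point = Up nat | Lo nat

record 'c part =
  upper :: "'c list"
  lower :: "'c list"
  blocks :: "point set set"

definition points_of :: "'c list \<Rightarrow> 'c list \<Rightarrow> point set" where
  "points_of w w' = {Up i | i. i < length w} \<union> {Lo j | j. j < length w'}"

definition points :: "'c part \<Rightarrow> point set" where
  "points p = points_of (upper p) (lower p)"

fun colour :: "'c part \<Rightarrow> point \<Rightarrow> 'c" where
  "colour p (Up i) = upper p ! i"
| "colour p (Lo j) = lower p ! j"

definition is_partition :: "'c part \<Rightarrow> bool" where
  "is_partition p \<longleftrightarrow>
     (\<forall>B\<in>blocks p. B \<noteq> {} \<and> B \<subseteq> points p) \<and>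
     (\<forall>B1\<in>blocks p. \<forall>B2\<in>blocks p. B1 \<noteq> B2 \<longrightarrow> B1 \<inter> B2 = {}) \<and>
     \<Union>(blocks p) = points p"

text \<open>Linear order of points: upper row left to right, then lower row right to left.\<close>
fun pos :: "'c part \<Rightarrow> point \<Rightarrow> nat" where
  "pos p (Up i) = i"
| "pos p (Lo j) = length (upper p) + (length (lower p) - 1 - j)"

definition noncrossing :: "'c part \<Rightarrow> bool" where
  "noncrossing p \<longleftrightarrow>
     (\<forall>B1\<in>blocks p. \<forall>B2\<in>blocks p. B1 \<noteq> B2 \<longrightarrow>
        \<not> (\<exists>k1\<in>B1. \<exists>k2\<in>B2. \<exists>k3\<in>B1. \<exists>k4\<in>B2.
              pos p k1 < pos p k2 \<and> pos p k2 < pos p k3 \<and> pos p k3 < pos p k4))"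

definition idp :: "'c \<Rightarrow> 'c part" where
  "idp a = \<lparr>upper = [a], lower = [a], blocks = {{Up 0, Lo 0}}\<rparr>"

fun shift :: "nat \<Rightarrow> nat \<Rightarrow> point \<Rightarrow> point" where
  "shift n m (Up i) = Up (i + n)"
| "shift n m (Lo j) = Lo (j + m)"

definition tensor :: "'c part \<Rightarrow> 'c part \<Rightarrow> 'c part" where
  "tensor p q = \<lparr>upper = upper p @ upper q, lower = lower p @ lower q,
     blocks = blocks p \<union> (image (shift (length (upper p)) (length (lower p)))) ` blocks q\<rparr>"

fun swap_pt :: "point \<Rightarrow> point" where
  "swap_pt (Up i) = Lo i"
| "swap_pt (Lo j) = Up j"

definition adjoint :: "'c part \<Rightarrow> 'c part" where
  "adjoint p = \<lparr>upper = lower p, lower = upper p, blocks = (image swap_pt) ` blocks p\<rparr>"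

text \<open>Composition: p on top, q below (requires lower p = upper q).  The lower points of p
  are identified with the upper points of q; blocks of the result are the connected
  components restricted to the outer points; components lying entirely in the middle
  (closed loops) are erased.\<close>

datatype lvl = T nat | M nat | Bt nat

fun emb_top :: "point \<Rightarrow> lvl" where
  "emb_top (Up i) = T i"
| "emb_top (Lo j) = M j"

fun emb_bot :: "point \<Rightarrow> lvl" where
  "emb_bot (Up j) = M j"
| "emb_bot (Lo k) = Bt k"

fun emb_out :: "point \<Rightarrow> lvl" where
  "emb_out (Up i) = T i"
| "emb_out (Lo k) = Bt k"

definition comp_rel :: "'c part \<Rightarrow> 'c part \<Rightarrow> (lvl \<times> lvl) set" where
  "comp_rel p q =
     {(emb_top u, emb_top v) | u v. \<exists>B\<in>blocks p. u \<in> B \<and> v \<in> B} \<union>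
     {(emb_bot u, emb_bot v) | u v. \<exists>B\<in>blocks q. u \<in> B \<and> v \<in> B}"

definition comp :: "'c part \<Rightarrow> 'c part \<Rightarrow> 'c part" where
  "comp p q = \<lparr>upper = upper p, lower = lower q,
     blocks = {{u \<in> points_of (upper p) (lower q). (emb_out v, emb_out u) \<in> (comp_rel p q)\<^sup>*}
               | v. v \<in> points_of (upper p) (lower q)}\<rparr>"

text \<open>Rotations: moving an extreme point to the other row, replacing its colour a by inv a.\<close>

fun rot_ul_pt :: "point \<Rightarrow> point" where
  "rot_ul_pt (Up 0) = Lo 0"
| "rot_ul_pt (Up (Suc i)) = Up i"
| "rot_ul_pt (Lo j) = Lo (Suc j)"

definition rot_ul :: "('c \<Rightarrow> 'c) \<Rightarrow> 'c part \<Rightarrow> 'c part" where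
  "rot_ul iv p = \<lparr>upper = tl (upper p), lower = iv (hd (upper p)) # lower p,
     blocks = (image rot_ul_pt) ` blocks p\<rparr>"

fun rot_ll_pt :: "point \<Rightarrow> point" where
  "rot_ll_pt (Lo 0) = Up 0"
| "rot_ll_pt (Lo (Suc j)) = Lo j"
| "rot_ll_pt (Up i) = Up (Suc i)"

definition rot_ll :: "('c \<Rightarrow> 'c) \<Rightarrow> 'c part \<Rightarrow> 'c part" where
  "rot_ll iv p = \<lparr>upper = iv (hd (lower p)) # upper p, lower = tl (lower p),
     blocks = (image rot_ll_pt) ` blocks p\<rparr>"

fun rot_ur_pt :: "nat \<Rightarrow> nat \<Rightarrow> point \<Rightarrow> point" where
  "rot_ur_pt n m (Up i) = (if i = n - 1 then Lo m else Up i)"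
| "rot_ur_pt n m (Lo j) = Lo j"

definition rot_ur :: "('c \<Rightarrow> 'c) \<Rightarrow> 'c part \<Rightarrow> 'c part" where
  "rot_ur iv p = \<lparr>upper = butlast (upper p), lower = lower p @ [iv (last (upper p))],
     blocks = (image (rot_ur_pt (length (upper p)) (length (lower p)))) ` blocks p\<rparr>"

fun rot_lr_pt :: "nat \<Rightarrow> nat \<Rightarrow> point \<Rightarrow> point" where
  "rot_lr_pt n m (Lo j) = (if j = m - 1 then Up n else Lo j)"
| "rot_lr_pt n m (Up i) = Up i"

definition rot_lr :: "('c \<Rightarrow> 'c) \<Rightarrow> 'c part \<Rightarrow> 'c part" where
  "rot_lr iv p = \<lparr>upper = upper p @ [iv (last (lower p))], lower = butlast (lower p),
     blocks = (image (rot_lr_pt (length (upper p)) (length (lower p)))) ` blocks p\<rparr>"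

definition is_category :: "('c \<Rightarrow> 'c) \<Rightarrow> 'c part set \<Rightarrow> bool" where
  "is_category iv C \<longleftrightarrow>
     (\<forall>p\<in>C. is_partition p \<and> noncrossing p) \<and>
     (\<forall>a. idp a \<in> C) \<and>
     (\<forall>p\<in>C. \<forall>q\<in>C. tensor p q \<in> C) \<and>
     (\<forall>p\<in>C. \<forall>q\<in>C. lower p = upper q \<longrightarrow> comp p q \<in> C) \<and>
     (\<forall>p\<in>C. adjoint p \<in> C) \<and>
     (\<forall>p\<in>C. upper p \<noteq> [] \<longrightarrow> rot_ul iv p \<in> C) \<and>
     (\<forall>p\<in>C. upper p \<noteq> [] \<longrightarrow> rot_ur iv p \<in> C) \<and>
     (\<forall>p\<in>C. lower p \<noteq> [] \<longrightarrow> rot_ll iv p \<in> C) \<and>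
     (\<forall>p\<in>C. lower p \<noteq> [] \<longrightarrow> rot_lr iv p \<in> C)"

inductive_set gen_cat :: "('c \<Rightarrow> 'c) \<Rightarrow> 'c part set \<Rightarrow> 'c part set" for iv S where
  base: "p \<in> S \<Longrightarrow> p \<in> gen_cat iv S"
| ident: "idp a \<in> gen_cat iv S"
| tens: "p \<in> gen_cat iv S \<Longrightarrow> q \<in> gen_cat iv S \<Longrightarrow> tensor p q \<in> gen_cat iv S"
| compo: "p \<in> gen_cat iv S \<Longrightarrow> q \<in> gen_cat iv S \<Longrightarrow> lower p = upper q \<Longrightarrow> comp p q \<in> gen_cat iv S"
| adj: "p \<in> gen_cat iv S \<Longrightarrow> adjoint p \<in> gen_cat iv S"
| rul: "p \<in> gen_cat iv S \<Longrightarrow> upper p \<noteq> [] \<Longrightarrow> rot_ul iv p \<in> gen_cat iv S"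
| rur: "p \<in> gen_cat iv S \<Longrightarrow> upper p \<noteq> [] \<Longrightarrow> rot_ur iv p \<in> gen_cat iv S"
| rll: "p \<in> gen_cat iv S \<Longrightarrow> lower p \<noteq> [] \<Longrightarrow> rot_ll iv p \<in> gen_cat iv S"
| rlr: "p \<in> gen_cat iv S \<Longrightarrow> lower p \<noteq> [] \<Longrightarrow> rot_lr iv p \<in> gen_cat iv S"

datatype col = X | Y

definition inv_xy :: "col \<Rightarrow> col" where
  "inv_xy c = c"

definition mono_part :: "col part set \<Rightarrow> col \<Rightarrow> col part set" where
  "mono_part C c = {p \<in> C. \<forall>u\<in>points p. colour p u = c}"

definition free_product :: "col part set \<Rightarrow> bool" where
  "free_product C \<longleftrightarrow> C = gen_cat inv_xy (mono_part C X \<union> mono_part C Y)"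

end

theory Submission
  imports Defs
begin

text \<open>Rotations are invertible in the generated category, so it suffices to treat partitions whose
  points all lie on the upper row. A block of minimal span in such a noncrossing partition
  consists of consecutive points; rotating it until it fills the whole upper row, the partition
  becomes the tensor product of this block, which is monochromatic, with the rest of the
  partition on the lower row. Since the block has even size, capping it off with pairings of its
  colour erases it as a closed loop, so the rest again lies in the category and has fewer points.\<close>

fun is_upper :: "point \<Rightarrow> bool" where
  "is_upper (Up i) = True"
| "is_upper (Lo j) = False"

abbreviation npoints :: "'c part \<Rightarrow> nat" where
  "npoints p \<equiv> length (upper p) + length (lower p)"

lemma points_of_Up [simp]: "Up i \<in> points_of w w' \<longleftrightarrow> i < length w"
  and points_of_Lo [simp]: "Lo j \<in> points_of w w' \<longleftrightarrow> j < length w'"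
  by (auto simp: points_of_def)

lemma finite_points [simp]: "finite (points p)"
proof -
  have "points p = Up ` {..<length (upper p)} \<union> Lo ` {..<length (lower p)}"
    by (auto simp: points_def points_of_def)
  then show ?thesis
    by simp
qed

lemma lvl_eq_emb_top [simp]:
  "T i = emb_top w \<longleftrightarrow> w = Up i" "M j = emb_top w \<longleftrightarrow> w = Lo j" "Bt k \<noteq> emb_top w"
  by (cases w; auto)+

lemma lvl_eq_emb_bot [simp]:
  "M j = emb_bot w \<longleftrightarrow> w = Up j" "Bt k = emb_bot w \<longleftrightarrow> w = Lo k" "T i \<noteq> emb_bot w"
  by (cases w; auto)+

lemma inj_on_pos: "inj_on (pos p) (points p)"
proof (rule inj_onI)
  fix u v assume "u \<in> points p" "v \<in> points p" "pos p u = pos p v"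
  then show "u = v"
    by (cases u; cases v) (auto simp: points_def)
qed

lemma partition_block_eq:
  "is_partition p \<Longrightarrow> B \<in> blocks p \<Longrightarrow> B' \<in> blocks p \<Longrightarrow> x \<in> B \<Longrightarrow> x \<in> B' \<Longrightarrow> B = B'"
  and partition_block_subset: "is_partition p \<Longrightarrow> B \<in> blocks p \<Longrightarrow> B \<subseteq> points p"
  and partition_block_nonempty: "is_partition p \<Longrightarrow> B \<in> blocks p \<Longrightarrow> B \<noteq> {}"
  and partition_covers: "is_partition p \<Longrightarrow> x \<in> points p \<Longrightarrow> \<exists>B\<in>blocks p. x \<in> B"
  unfolding is_partition_def by blast+

lemma partition_block_finite: "is_partition p \<Longrightarrow> B \<in> blocks p \<Longrightarrow> finite B"
  by (rule finite_subset[OF partition_block_subset finite_points])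

lemma is_categoryD:
  assumes "is_category iv C"
  shows "p \<in> C \<Longrightarrow> is_partition p" and "p \<in> C \<Longrightarrow> noncrossing p" and "idp a \<in> C"
    and "p \<in> C \<Longrightarrow> q \<in> C \<Longrightarrow> tensor p q \<in> C"
    and "p \<in> C \<Longrightarrow> q \<in> C \<Longrightarrow> lower p = upper q \<Longrightarrow> comp p q \<in> C"
    and "p \<in> C \<Longrightarrow> adjoint p \<in> C"
    and "p \<in> C \<Longrightarrow> upper p \<noteq> [] \<Longrightarrow> rot_ul iv p \<in> C"
    and "p \<in> C \<Longrightarrow> upper p \<noteq> [] \<Longrightarrow> rot_ur iv p \<in> C"
    and "p \<in> C \<Longrightarrow> lower p \<noteq> [] \<Longrightarrow> rot_lr iv p \<in> C"
  using assms unfolding is_category_def by blast+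

lemma noncrossingD:
  assumes "noncrossing p" "B \<in> blocks p" "B' \<in> blocks p" "B \<noteq> B'"
    and "k1 \<in> B" "k2 \<in> B'" "k3 \<in> B" "k4 \<in> B'"
    and "pos p k1 < pos p k2" "pos p k2 < pos p k3" "pos p k3 < pos p k4"
  shows False
proof -
  have "\<exists>k1\<in>B. \<exists>k2\<in>B'. \<exists>k3\<in>B. \<exists>k4\<in>B'.
      pos p k1 < pos p k2 \<and> pos p k2 < pos p k3 \<and> pos p k3 < pos p k4"
    using assms(5-11) by (intro bexI conjI)
  moreover note assms(1)[unfolded noncrossing_def, rule_format, OF assms(2-4)]
  ultimately show False
    by contradiction
qed

lemma gen_cat_subset:
  assumes "is_category iv C" and "S \<subseteq> C"
  shows "gen_cat iv S \<subseteq> C"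
proof
  fix p assume "p \<in> gen_cat iv S"
  then show "p \<in> C"
    by induction (use assms in \<open>auto simp: is_category_def\<close>)
qed

lemma noncrossing_nested_block:
  assumes p: "is_partition p" "noncrossing p"
    and B: "B \<in> blocks p" "u \<in> B" "w \<in> B"
    and B': "B' \<in> blocks p" "B' \<noteq> B" "x \<in> B'" "v \<in> B'"
    and between: "pos p u < pos p x" "pos p x < pos p w"
  shows "pos p u < pos p v \<and> pos p v < pos p w"
proof -
  have "v \<noteq> u" "v \<noteq> w"
    using partition_block_eq[OF p(1) B(1) B'(1)] B B' by blast+
  moreover have "u \<in> points p" "v \<in> points p" "w \<in> points p"
    using partition_block_subset[OF p(1)] B B' by blast+
  ultimately have "pos p v \<noteq> pos p u" "pos p v \<noteq> pos p w"
    using inj_on_pos by (metis inj_on_contraD)+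
  moreover have "\<not> pos p v < pos p u"
    using noncrossingD[OF p(2) B'(1) B(1) B'(2), of v u x w] B B' between by blast
  moreover have "\<not> pos p w < pos p v"
    using noncrossingD[OF p(2) B(1) B'(1) B'(2)[symmetric], of u x w v] B B' between by blast
  ultimately show ?thesis
    by linarith
qed

lemma noncrossing_interval_block:
  assumes p: "is_partition p" "noncrossing p" and lower: "lower p = []"
    and nonempty: "points p \<noteq> {}"
  obtains a k where "Up ` {a..<a + k} \<in> blocks p" and "a + k \<le> length (upper p)"
proof -
  define span where "span B = Max (pos p ` B) - Min (pos p ` B)" for B
  obtain B0 where "B0 \<in> blocks p"
    using nonempty partition_covers[OF p(1)] by blast
  then obtain B where B: "B \<in> blocks p" and minimal: "\<And>B'. B' \<in> blocks p \<Longrightarrow> span B \<le> span B'"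
    using ex_has_least_nat[of "\<lambda>B. B \<in> blocks p" B0 span] by blast
  have Up_pos: "Up (pos p u) = u" "pos p u < length (upper p)" if "u \<in> B" for u
    using that partition_block_subset[OF p(1) B] lower by (auto simp: points_def points_of_def)
  have finite_pos: "finite (pos p ` B')" "pos p ` B' \<noteq> {}" if "B' \<in> blocks p" for B'
    using that partition_block_finite[OF p(1)] partition_block_nonempty[OF p(1)] by auto
  define lo where "lo = Min (pos p ` B)"
  define hi where "hi = Max (pos p ` B)"
  have "lo \<in> pos p ` B" "hi \<in> pos p ` B"
    unfolding lo_def hi_def using finite_pos[OF B] by simp_all
  then have "lo \<le> hi"
    unfolding lo_def using finite_pos[OF B] by simp
  from \<open>lo \<in> pos p ` B\<close> \<open>hi \<in> pos p ` B\<close> have lo_hi: "Up lo \<in> B" "Up hi \<in> B" "hi < length (upper p)"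
    using Up_pos by (metis imageE)+
  have "B = Up ` {lo..hi}"
  proof
    show "B \<subseteq> Up ` {lo..hi}"
    proof
      fix u assume "u \<in> B"
      then have "lo \<le> pos p u" "pos p u \<le> hi"
        unfolding lo_def hi_def using finite_pos[OF B] by simp_all
      then show "u \<in> Up ` {lo..hi}"
        using Up_pos(1)[OF \<open>u \<in> B\<close>] by (metis atLeastAtMost_iff imageI)
    qed
  next
    show "Up ` {lo..hi} \<subseteq> B"
    proof (rule subsetI, rule ccontr)
      fix x assume "x \<in> Up ` {lo..hi}" and "x \<notin> B"
      then obtain j where j: "x = Up j" "lo < j" "j < hi"
        using lo_hi by (auto simp: le_less)
      then have "x \<in> points p"
        using lo_hi by (simp add: points_def)
      then obtain B' where B': "B' \<in> blocks p" "x \<in> B'"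
        using partition_covers[OF p(1)] by blast
      have "B' \<noteq> B"
        using B'(2) \<open>x \<notin> B\<close> by blast
      have inside: "lo < pos p v \<and> pos p v < hi" if "v \<in> B'" for v
        using noncrossing_nested_block[OF p B lo_hi(1,2) B'(1) \<open>B' \<noteq> B\<close> B'(2) that] j by simp
      have "lo < Min (pos p ` B')" "Max (pos p ` B') < hi"
        using inside finite_pos[OF B'(1)] by auto
      then have "span B' < span B"
        unfolding span_def lo_def[symmetric] hi_def[symmetric]
        using j by linarith
      with minimal[OF B'(1)] show False
        by simp
    qed
  qed
  moreover have "{lo..hi} = {lo..<lo + (Suc hi - lo)}" and "lo + (Suc hi - lo) \<le> length (upper p)"
    using lo_hi \<open>lo \<le> hi\<close> by auto
  ultimately show thesis
    using that B by metis
qed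

lemma rot_ll_rot_ul:
  assumes "\<And>c. iv (iv c) = c" and "upper p \<noteq> []"
  shows "rot_ll iv (rot_ul iv p) = p"
proof -
  have "rot_ll_pt (rot_ul_pt u) = u" for u
    by (cases u rule: rot_ul_pt.cases) simp_all
  then show ?thesis
    using assms by (simp add: rot_ll_def rot_ul_def image_image)
qed

lemma rot_lr_rot_ur:
  assumes "\<And>c. iv (iv c) = c" and "upper p \<noteq> []" and "is_partition p"
  shows "rot_lr iv (rot_ur iv p) = p"
proof -
  let ?n = "length (upper p)" and ?m = "length (lower p)"
  have "rot_lr_pt (?n - 1) (Suc ?m) (rot_ur_pt ?n ?m u) = u" if "u \<in> points p" for u
    using that assms(2) by (cases u) (auto simp: points_def)
  then have "(\<lambda>u. rot_lr_pt (?n - 1) (Suc ?m) (rot_ur_pt ?n ?m u)) ` B = B" if "B \<in> blocks p" for B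
    using partition_block_subset[OF assms(3) that] by (auto simp: subset_iff image_iff)
  then show ?thesis
    using assms(1,2) by (simp add: rot_lr_def rot_ur_def image_image)
qed

lemma rot_ur_rot_lr:
  assumes "\<And>c. iv (iv c) = c" and "lower p \<noteq> []" and "is_partition p"
  shows "rot_ur iv (rot_lr iv p) = p"
proof -
  let ?n = "length (upper p)" and ?m = "length (lower p)"
  have "rot_ur_pt (Suc ?n) (?m - 1) (rot_lr_pt ?n ?m u) = u" if "u \<in> points p" for u
    using that assms(2) by (cases u) (auto simp: points_def)
  then have "(\<lambda>u. rot_ur_pt (Suc ?n) (?m - 1) (rot_lr_pt ?n ?m u)) ` B = B" if "B \<in> blocks p" for B
    using partition_block_subset[OF assms(3) that] by (auto simp: subset_iff image_iff)
  then show ?thesis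
    using assms(1,2) by (simp add: rot_lr_def rot_ur_def image_image)
qed

lemma gen_cat_if_rot_ul:
  assumes "\<And>c. iv (iv c) = c" and "upper p \<noteq> []" and "rot_ul iv p \<in> gen_cat iv S"
  shows "p \<in> gen_cat iv S"
  using gen_cat.rll[OF assms(3)] rot_ll_rot_ul[OF assms(1,2)] by (simp add: rot_ul_def)

lemma gen_cat_if_rot_ur:
  assumes "\<And>c. iv (iv c) = c" and "upper p \<noteq> []" and "is_partition p"
    and "rot_ur iv p \<in> gen_cat iv S"
  shows "p \<in> gen_cat iv S"
  using gen_cat.rlr[OF assms(4)] rot_lr_rot_ur[OF assms(1-3)] by (simp add: rot_ur_def)

lemma gen_cat_if_rot_lr:
  assumes "\<And>c. iv (iv c) = c" and "lower p \<noteq> []" and "is_partition p"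
    and "rot_lr iv p \<in> gen_cat iv S"
  shows "p \<in> gen_cat iv S"
  using gen_cat.rur[OF assms(4)] rot_ur_rot_lr[OF assms(1-3)] by (simp add: rot_lr_def)

lemma block_rot_ul_shift:
  assumes "Up ` {Suc a..<Suc a + k} \<in> blocks p"
  shows "Up ` {a..<a + k} \<in> blocks (rot_ul iv p)"
proof -
  have "rot_ul_pt ` Up ` Suc ` {a..<a + k} = Up ` {a..<a + k}"
    by (simp del: image_Suc_atLeastLessThan add: image_image)
  then have "rot_ul_pt ` Up ` {Suc a..<Suc a + k} = Up ` {a..<a + k}"
    by simp
  then show ?thesis
    using assms unfolding rot_ul_def by (metis image_eqI part.select_convs(3))
qed

lemma block_rot_ur:
  assumes "B \<in> blocks p" and "Up (length (upper p) - 1) \<notin> B"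
  shows "B \<in> blocks (rot_ur iv p)"
proof -
  have "rot_ur_pt (length (upper p)) (length (lower p)) u = u" if "u \<in> B" for u
    using that assms(2) by (cases u) auto
  then have "rot_ur_pt (length (upper p)) (length (lower p)) ` B = B"
    by simp
  then show ?thesis
    using assms(1) unfolding rot_ur_def by (metis image_eqI part.select_convs(3))
qed

definition upper_blocks :: "'c part \<Rightarrow> point set set" where
  "upper_blocks p = {B \<in> blocks p. \<forall>u\<in>B. is_upper u}"

definition lower_blocks :: "'c part \<Rightarrow> point set set" where
  "lower_blocks p = {B \<in> blocks p. \<forall>u\<in>B. \<not> is_upper u}"

definition row_separated :: "'c part \<Rightarrow> bool" where
  "row_separated p \<longleftrightarrow> blocks p = upper_blocks p \<union> lower_blocks p"

definition upper_part :: "'c part \<Rightarrow> 'c part" where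
  "upper_part p = \<lparr>upper = upper p, lower = [], blocks = upper_blocks p\<rparr>"

definition lower_part :: "'c part \<Rightarrow> 'c part" where
  "lower_part p = \<lparr>upper = [], lower = lower p, blocks = lower_blocks p\<rparr>"

lemma blocks_if_lower_Nil:
  assumes "is_partition p" and "lower p = []"
  shows "upper_blocks p = blocks p" and "lower_blocks p = {}"
proof -
  have "is_upper u" if "B \<in> blocks p" "u \<in> B" for B u
    using partition_block_subset[OF assms(1) that(1)] that(2) assms(2)
    by (cases u) (auto simp: points_def)
  then show "upper_blocks p = blocks p" and "lower_blocks p = {}"
    using partition_block_nonempty[OF assms(1)]
    by (auto simp: upper_blocks_def lower_blocks_def ex_in_conv)
qed

lemma blocks_if_upper_Nil:
  assumes "is_partition p" and "upper p = []"
  shows "upper_blocks p = {}" and "lower_blocks p = blocks p"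
proof -
  have "\<not> is_upper u" if "B \<in> blocks p" "u \<in> B" for B u
    using partition_block_subset[OF assms(1) that(1)] that(2) assms(2)
    by (cases u) (auto simp: points_def)
  then show "upper_blocks p = {}" and "lower_blocks p = blocks p"
    using partition_block_nonempty[OF assms(1)]
    by (auto simp: upper_blocks_def lower_blocks_def ex_in_conv)
qed

lemma row_separated_if_upper_block:
  assumes "is_partition p" and "Up ` {..<length (upper p)} \<in> blocks p"
  shows "row_separated p"
proof -
  have lower: "\<not> is_upper u" if "B \<in> blocks p" "B \<noteq> Up ` {..<length (upper p)}" "u \<in> B" for B u
  proof (cases u)
    case (Up i)
    then have "u \<in> Up ` {..<length (upper p)}"
      using partition_block_subset[OF assms(1) that(1)] that(3) by (auto simp: points_def)
    then show ?thesis
      using partition_block_eq[OF assms(1) that(1) assms(2) that(3)] that(2) by blast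
  qed simp
  have "B \<in> upper_blocks p \<union> lower_blocks p" if "B \<in> blocks p" for B
  proof (cases "B = Up ` {..<length (upper p)}")
    case True
    then show ?thesis
      using that by (auto simp: upper_blocks_def)
  next
    case False
    then show ?thesis
      using that lower by (auto simp: lower_blocks_def)
  qed
  then show ?thesis
    by (auto simp: row_separated_def upper_blocks_def lower_blocks_def)
qed

lemma tensor_upper_part_lower_part:
  assumes "row_separated p"
  shows "tensor (upper_part p) (lower_part p) = p"
proof -
  have "shift (length (upper p)) 0 ` B = B" if "B \<in> lower_blocks p" for B
  proof -
    have "shift (length (upper p)) 0 u = u" if "u \<in> B" for u
      using \<open>B \<in> lower_blocks p\<close> that by (cases u) (auto simp: lower_blocks_def)
    then show ?thesis
      by (auto simp: image_iff)
  qed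
  then have "image (shift (length (upper p)) 0) ` lower_blocks p = lower_blocks p"
    by (auto simp: image_iff)
  then show ?thesis
    using assms by (simp add: tensor_def upper_part_def lower_part_def row_separated_def)
qed

lemma comp_component_upper:
  assumes "is_partition a" and "B \<in> upper_blocks a" and "v \<in> B"
  shows "(comp_rel a b)\<^sup>* `` {emb_top v} = emb_top ` B"
proof
  have B: "B \<in> blocks a" "\<forall>u\<in>B. is_upper u"
    using assms(2) by (auto simp: upper_blocks_def)
  have "comp_rel a b `` (emb_top ` B) \<subseteq> emb_top ` B"
  proof
    fix z assume "z \<in> comp_rel a b `` (emb_top ` B)"
    then obtain u where u: "u \<in> B" "(emb_top u, z) \<in> comp_rel a b"
      by blast
    have "emb_top u \<noteq> emb_bot w" for w
      using B(2) u(1) by (cases u; cases w) auto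
    then obtain B' w w' where "B' \<in> blocks a" "w \<in> B'" "w' \<in> B'" "emb_top u = emb_top w" "z = emb_top w'"
      using u(2) unfolding comp_rel_def by blast
    moreover have "emb_top u = emb_top w \<Longrightarrow> u = w"
      by (cases u; cases w) auto
    ultimately show "z \<in> emb_top ` B"
      using partition_block_eq[OF assms(1) B(1)] u(1) by blast
  qed
  then have "(comp_rel a b)\<^sup>* `` (emb_top ` B) = emb_top ` B"
    by (rule Image_closed_trancl)
  then show "(comp_rel a b)\<^sup>* `` {emb_top v} \<subseteq> emb_top ` B"
    using assms(3) by (metis Image_mono empty_subsetI image_eqI insert_subset order_refl)
  show "emb_top ` B \<subseteq> (comp_rel a b)\<^sup>* `` {emb_top v}"
    using B(1) assms(3) unfolding comp_rel_def by blast
qed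

lemma comp_component_lower:
  assumes "is_partition b" and "B \<in> lower_blocks b" and "v \<in> B"
  shows "(comp_rel a b)\<^sup>* `` {emb_bot v} = emb_bot ` B"
proof
  have B: "B \<in> blocks b" "\<forall>u\<in>B. \<not> is_upper u"
    using assms(2) by (auto simp: lower_blocks_def)
  have "comp_rel a b `` (emb_bot ` B) \<subseteq> emb_bot ` B"
  proof
    fix z assume "z \<in> comp_rel a b `` (emb_bot ` B)"
    then obtain u where u: "u \<in> B" "(emb_bot u, z) \<in> comp_rel a b"
      by blast
    have "emb_bot u \<noteq> emb_top w" for w
      using B(2) u(1) by (cases u; cases w) auto
    then obtain B' w w' where "B' \<in> blocks b" "w \<in> B'" "w' \<in> B'" "emb_bot u = emb_bot w" "z = emb_bot w'"
      using u(2) unfolding comp_rel_def by blast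
    moreover have "emb_bot u = emb_bot w \<Longrightarrow> u = w"
      by (cases u; cases w) auto
    ultimately show "z \<in> emb_bot ` B"
      using partition_block_eq[OF assms(1) B(1)] u(1) by blast
  qed
  then have "(comp_rel a b)\<^sup>* `` (emb_bot ` B) = emb_bot ` B"
    by (rule Image_closed_trancl)
  then show "(comp_rel a b)\<^sup>* `` {emb_bot v} \<subseteq> emb_bot ` B"
    using assms(3) by (metis Image_mono empty_subsetI image_eqI insert_subset order_refl)
  show "emb_bot ` B \<subseteq> (comp_rel a b)\<^sup>* `` {emb_bot v}"
    using B(1) assms(3) unfolding comp_rel_def by blast
qed

lemma comp_block_upper:
  assumes "is_partition a" and "B \<in> upper_blocks a" and "v \<in> B"
  shows "{u \<in> points_of (upper a) (lower b). (emb_out v, emb_out u) \<in> (comp_rel a b)\<^sup>*} = B"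
proof -
  have upper: "B \<subseteq> points a" "\<forall>u\<in>B. is_upper u"
    using assms(2) partition_block_subset[OF assms(1)] by (auto simp: upper_blocks_def)
  have "emb_out v = emb_top v"
    using upper(2) assms(3) by (cases v) auto
  then have "(emb_out v, z) \<in> (comp_rel a b)\<^sup>* \<longleftrightarrow> z \<in> emb_top ` B" for z
    using comp_component_upper[OF assms, of b] by (metis Image_singleton_iff)
  moreover have "emb_out u \<in> emb_top ` B \<longleftrightarrow> u \<in> B" for u
    using upper(2) by (cases u) (auto simp: image_iff)
  moreover have "B \<subseteq> points_of (upper a) (lower b)"
  proof
    fix x assume "x \<in> B"
    with upper show "x \<in> points_of (upper a) (lower b)"
      by (cases x) (auto simp: points_def)
  qed
  ultimately show ?thesis
    by auto
qed

lemma comp_block_lower: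
  assumes "is_partition b" and "B \<in> lower_blocks b" and "v \<in> B"
  shows "{u \<in> points_of (upper a) (lower b). (emb_out v, emb_out u) \<in> (comp_rel a b)\<^sup>*} = B"
proof -
  have lower: "B \<subseteq> points b" "\<forall>u\<in>B. \<not> is_upper u"
    using assms(2) partition_block_subset[OF assms(1)] by (auto simp: lower_blocks_def)
  have "emb_out v = emb_bot v"
    using lower(2) assms(3) by (cases v) auto
  then have "(emb_out v, z) \<in> (comp_rel a b)\<^sup>* \<longleftrightarrow> z \<in> emb_bot ` B" for z
    using comp_component_lower[OF assms, of a] by (metis Image_singleton_iff)
  moreover have "emb_out u \<in> emb_bot ` B \<longleftrightarrow> u \<in> B" for u
    using lower(2) by (cases u) (auto simp: image_iff)
  moreover have "B \<subseteq> points_of (upper a) (lower b)"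
  proof
    fix x assume "x \<in> B"
    with lower show "x \<in> points_of (upper a) (lower b)"
      by (cases x) (auto simp: points_def)
  qed
  ultimately show ?thesis
    by auto
qed

lemma blocks_comp_row_separated:
  assumes "is_partition a" "is_partition b" "row_separated a" "row_separated b"
  shows "blocks (comp a b) = upper_blocks a \<union> lower_blocks b"
proof -
  let ?P = "points_of (upper a) (lower b)"
  let ?component = "\<lambda>v. {u \<in> ?P. (emb_out v, emb_out u) \<in> (comp_rel a b)\<^sup>*}"
  have component: "?component v = B" if "B \<in> upper_blocks a \<union> lower_blocks b" "v \<in> B" for B v
    using that comp_block_upper[OF assms(1)] comp_block_lower[OF assms(2)] by blast
  have cover: "\<exists>B \<in> upper_blocks a \<union> lower_blocks b. v \<in> B" if "v \<in> ?P" for v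
  proof (cases v)
    case (Up i)
    then have "v \<in> points a" "is_upper v"
      using that by (simp_all add: points_def)
    then obtain B where "B \<in> blocks a" "v \<in> B"
      using partition_covers[OF assms(1)] by blast
    moreover have "B \<notin> lower_blocks a"
      using \<open>v \<in> B\<close> \<open>is_upper v\<close> unfolding lower_blocks_def by blast
    ultimately show ?thesis
      using assms(3) by (auto simp: row_separated_def)
  next
    case (Lo j)
    then have "v \<in> points b" "\<not> is_upper v"
      using that by (simp_all add: points_def)
    then obtain B where "B \<in> blocks b" "v \<in> B"
      using partition_covers[OF assms(2)] by blast
    moreover have "B \<notin> upper_blocks b"
      using \<open>v \<in> B\<close> \<open>\<not> is_upper v\<close> unfolding upper_blocks_def by blast
    ultimately show ?thesis
      using assms(4) by (auto simp: row_separated_def)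
  qed
  have "blocks (comp a b) = {?component v | v. v \<in> ?P}"
    by (simp add: comp_def)
  also have "\<dots> = upper_blocks a \<union> lower_blocks b"
  proof (intro equalityI subsetI)
    fix B assume "B \<in> {?component v | v. v \<in> ?P}"
    then obtain v where v: "v \<in> ?P" "B = ?component v"
      by blast
    obtain B' where "B' \<in> upper_blocks a \<union> lower_blocks b" "v \<in> B'"
      using cover[OF v(1)] by blast
    then show "B \<in> upper_blocks a \<union> lower_blocks b"
      using component v(2) by simp
  next
    fix B assume B: "B \<in> upper_blocks a \<union> lower_blocks b"
    then have "B \<noteq> {}"
      using partition_block_nonempty[OF assms(1)] partition_block_nonempty[OF assms(2)]
      by (auto simp: upper_blocks_def lower_blocks_def)
    then obtain v where "v \<in> B"
      by blast
    then have "B = ?component v" and "v \<in> ?component v"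
      using component[OF B] by simp_all
    then show "B \<in> {?component v | v. v \<in> ?P}"
      by blast
  qed
  finally show ?thesis .
qed

lemma comp_eq_lower_part:
  assumes "is_partition L" "upper L = []" "is_partition q" "row_separated q"
  shows "comp L q = lower_part q"
proof -
  have "row_separated L"
    using blocks_if_upper_Nil[OF assms(1,2)] by (simp add: row_separated_def)
  then show ?thesis
    using blocks_comp_row_separated[OF assms(1,3) _ assms(4)] blocks_if_upper_Nil[OF assms(1,2)] assms(2)
    by (simp add: comp_def lower_part_def)
qed

lemma comp_eq_upper_part:
  assumes "is_partition q" "row_separated q" "is_partition R" "lower R = []"
  shows "comp q R = upper_part q"
proof -
  have "row_separated R"
    using blocks_if_lower_Nil[OF assms(3,4)] by (simp add: row_separated_def)
  then show ?thesis
    using blocks_comp_row_separated[OF assms(1,3,2)] blocks_if_lower_Nil[OF assms(3,4)] assms(4)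
    by (simp add: comp_def upper_part_def)
qed

lemma inv_xy_inv_xy: "inv_xy (inv_xy c) = c"
  by (simp add: inv_xy_def)

fun caps :: "col \<Rightarrow> nat \<Rightarrow> col part" where
  "caps c 0 = rot_ul inv_xy (idp c)"
| "caps c (Suc n) = tensor (caps c 0) (caps c n)"

lemma caps_words: "upper (caps c n) = [] \<and> lower (caps c n) = replicate (2 * n + 2) c"
  by (induction n) (auto simp: tensor_def rot_ul_def idp_def inv_xy_def numeral_2_eq_2)

context
  fixes C :: "col part set"
  assumes cat: "is_category inv_xy C"
    and even_blocks: "\<forall>p\<in>C. \<forall>B\<in>blocks p. even (card B)"
    and no_mixed: "\<forall>p\<in>C. \<forall>B\<in>blocks p. \<not> (\<exists>u\<in>B. \<exists>v\<in>B. colour p u = X \<and> colour p v = Y)"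
begin

abbreviation generated :: "col part set" where
  "generated \<equiv> gen_cat inv_xy (mono_part C X \<union> mono_part C Y)"

lemma caps_in_category: "caps c n \<in> C"
proof -
  have "caps c 0 \<in> C"
    using is_categoryD(7)[OF cat is_categoryD(3)[OF cat]] by (simp add: idp_def)
  then show ?thesis
    by (induction n) (simp_all add: is_categoryD(4)[OF cat])
qed

lemma colour_eq_on_block:
  assumes "p \<in> C" "B \<in> blocks p" "u \<in> B" "v \<in> B"
  shows "colour p u = colour p v"
proof (rule ccontr)
  assume "colour p u \<noteq> colour p v"
  then have "colour p u = X \<and> colour p v = Y \<or> colour p v = X \<and> colour p u = Y"
    by (cases "colour p u"; cases "colour p v") simp_all
  then show False
    using no_mixed assms by blast
qed

lemma upper_block_colour:
  assumes "q \<in> C" and "Up ` {..<length (upper q)} \<in> blocks q"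
  shows "upper q = replicate (length (upper q)) (upper q ! 0)"
proof (rule nth_equalityI)
  fix j assume "j < length (upper q)"
  then have "Up j \<in> Up ` {..<length (upper q)}" "Up 0 \<in> Up ` {..<length (upper q)}"
    by auto
  then have "colour q (Up j) = colour q (Up 0)"
    by (rule colour_eq_on_block[OF assms])
  then show "upper q ! j = replicate (length (upper q)) (upper q ! 0) ! j"
    using \<open>j < length (upper q)\<close> by simp
qed simp

lemma lower_part_in_category:
  assumes "q \<in> C" and block: "Up ` {..<length (upper q)} \<in> blocks q"
  shows "lower_part q \<in> C"
proof -
  let ?k = "length (upper q)"
  have q: "is_partition q"
    using is_categoryD(1)[OF cat assms(1)] .
  have "card (Up ` {..<?k}) = ?k"
    by (simp add: card_image inj_on_def)
  then have "even ?k"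
    using even_blocks assms by metis
  moreover have "?k \<noteq> 0"
    using partition_block_nonempty[OF q block] by auto
  ultimately have "?k = 2 * (?k div 2 - 1) + 2"
    by presburger
  then obtain h where h: "?k = 2 * h + 2" ..
  let ?c = "upper q ! 0"
  have "lower (caps ?c h) = upper q"
    using caps_words upper_block_colour[OF assms] h by metis
  then have "comp (caps ?c h) q \<in> C"
    using is_categoryD(5)[OF cat caps_in_category assms(1)] by blast
  moreover have "comp (caps ?c h) q = lower_part q"
    using comp_eq_lower_part[OF is_categoryD(1)[OF cat caps_in_category] _ q
        row_separated_if_upper_block[OF q block]] caps_words by blast
  ultimately show ?thesis
    by simp
qed

lemma upper_part_in_generated:
  assumes "q \<in> C" and block: "Up ` {..<length (upper q)} \<in> blocks q"
  shows "upper_part q \<in> generated"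
proof -
  let ?Z = "adjoint (lower_part q)"
  have q: "is_partition q"
    using is_categoryD(1)[OF cat assms(1)] .
  have Z: "?Z \<in> C" "upper ?Z = lower q" "lower ?Z = []"
    using is_categoryD(6)[OF cat lower_part_in_category[OF assms]]
    by (simp_all add: adjoint_def lower_part_def)
  have "comp q ?Z = upper_part q"
    using comp_eq_upper_part[OF q row_separated_if_upper_block[OF q block] is_categoryD(1)[OF cat Z(1)] Z(3)] .
  moreover have "comp q ?Z \<in> C"
    using is_categoryD(5)[OF cat assms(1) Z(1)] Z(2) by simp
  ultimately have "upper_part q \<in> C"
    by simp
  moreover have "colour (upper_part q) u = upper q ! 0" if u: "u \<in> points (upper_part q)" for u
  proof -
    obtain j where j: "u = Up j" "j < length (upper q)"
      using u by (cases u) (auto simp: points_def upper_part_def)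
    then have "upper q ! j = upper q ! 0"
      using upper_block_colour[OF assms] by (metis nth_replicate)
    then show ?thesis
      using j(1) by (simp add: upper_part_def)
  qed
  ultimately have "upper_part q \<in> mono_part C (upper q ! 0)"
    by (simp add: mono_part_def)
  then show ?thesis
    by (intro gen_cat.base) (cases "upper q ! 0"; simp)
qed

lemma upper_block_in_generated:
  assumes "q \<in> C" and block: "Up ` {..<length (upper q)} \<in> blocks q"
    and "lower_part q \<in> generated"
  shows "q \<in> generated"
proof -
  have "row_separated q"
    using row_separated_if_upper_block[OF is_categoryD(1)[OF cat assms(1)] block] .
  then show ?thesis
    using gen_cat.tens[OF upper_part_in_generated[OF assms(1,2)] assms(3)]
    by (simp add: tensor_upper_part_lower_part)
qed

lemma interval_block_in_generated:
  assumes smaller: "\<And>p. p \<in> C \<Longrightarrow> npoints p < npoints q \<Longrightarrow> p \<in> generated"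
    and "q \<in> C" and "Up ` {a..<a + k} \<in> blocks q" and "a + k \<le> length (upper q)"
  shows "q \<in> generated"
  using assms
proof (induction "length (upper q)" arbitrary: q a rule: less_induct)
  case less
  have q: "is_partition q"
    using is_categoryD(1)[OF cat less.prems(2)] .
  have "upper q \<noteq> []"
    using partition_block_nonempty[OF q less.prems(3)] less.prems(4) by auto
  consider "a + k < length (upper q)" | "0 < a" | "a = 0" "k = length (upper q)"
    using less.prems(4) by linarith
  then show ?case
  proof cases
    case 1
    let ?q = "rot_ur inv_xy q"
    have "Up (length (upper q) - 1) \<notin> Up ` {a..<a + k}"
      using 1 by auto
    then have "Up ` {a..<a + k} \<in> blocks ?q"
      by (rule block_rot_ur[OF less.prems(3)])
    moreover have "?q \<in> C"
      using is_categoryD(8)[OF cat less.prems(2) \<open>upper q \<noteq> []\<close>] .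
    moreover have "npoints ?q = npoints q" "length (upper ?q) < length (upper q)"
      using \<open>upper q \<noteq> []\<close> by (auto simp: rot_ur_def)
    moreover have "a + k \<le> length (upper ?q)"
      using 1 by (simp add: rot_ur_def)
    ultimately have "?q \<in> generated"
      using less.hyps less.prems(1) by metis
    then show ?thesis
      using gen_cat_if_rot_ur[OF inv_xy_inv_xy \<open>upper q \<noteq> []\<close> q] by blast
  next
    case 2
    let ?q = "rot_ul inv_xy q"
    obtain a' where "a = Suc a'"
      using 2 gr0_implies_Suc by blast
    then have "Up ` {a'..<a' + k} \<in> blocks ?q"
      using block_rot_ul_shift less.prems(3) by auto
    moreover have "?q \<in> C"
      using is_categoryD(7)[OF cat less.prems(2) \<open>upper q \<noteq> []\<close>] .
    moreover have "npoints ?q = npoints q" "length (upper ?q) < length (upper q)"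
      using \<open>upper q \<noteq> []\<close> by (auto simp: rot_ul_def)
    moreover have "a' + k \<le> length (upper ?q)"
      using less.prems(4) \<open>a = Suc a'\<close> by (simp add: rot_ul_def)
    ultimately have "?q \<in> generated"
      using less.hyps less.prems(1) by metis
    then show ?thesis
      using gen_cat_if_rot_ul[OF inv_xy_inv_xy \<open>upper q \<noteq> []\<close>] by blast
  next
    case 3
    then have block: "Up ` {..<length (upper q)} \<in> blocks q"
      using less.prems(3) by (simp add: atLeast0LessThan)
    have "npoints (lower_part q) < npoints q"
      using \<open>upper q \<noteq> []\<close> by (simp add: lower_part_def)
    then have "lower_part q \<in> generated"
      using less.prems(1) lower_part_in_category[OF less.prems(2) block] by blast
    then show ?thesis
      using upper_block_in_generated[OF less.prems(2) block] by blast
  qed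
qed

lemma category_subset_generated: "p \<in> C \<Longrightarrow> p \<in> generated"
proof (induction "npoints p" arbitrary: p rule: less_induct)
  case less
  then show ?case
  proof (induction "length (lower p)" arbitrary: p)
    case 0
    have p: "is_partition p" "noncrossing p"
      using is_categoryD(1,2)[OF cat "0.prems"(2)] by simp_all
    show ?case
    proof (cases "points p = {}")
      case True
      then have "p \<in> mono_part C X"
        using "0.prems"(2) by (simp add: mono_part_def)
      then show ?thesis
        by (intro gen_cat.base) simp
    next
      case False
      then obtain a k where "Up ` {a..<a + k} \<in> blocks p" "a + k \<le> length (upper p)"
        using noncrossing_interval_block[OF p] "0.hyps" by force
      then show ?thesis
        using interval_block_in_generated "0.prems" by blast
    qed
  next
    case (Suc m)
    let ?p = "rot_lr inv_xy p"
    have "lower p \<noteq> []" "is_partition p"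
      using Suc.hyps(2) is_categoryD(1)[OF cat Suc.prems(2)] by auto
    moreover have "?p \<in> C"
      using is_categoryD(9)[OF cat Suc.prems(2) \<open>lower p \<noteq> []\<close>] .
    moreover have "npoints ?p = npoints p" "m = length (lower ?p)"
      using Suc.hyps(2) \<open>lower p \<noteq> []\<close> by (auto simp: rot_lr_def)
    ultimately show ?case
      using Suc.hyps(1) Suc.prems(1) gen_cat_if_rot_lr[OF inv_xy_inv_xy] by metis
  qed
qed

end

theorem lemma6p2:
  fixes C :: "col part set"
  assumes cat: "is_category inv_xy C"
    and even_blocks: "\<forall>p\<in>C. \<forall>B\<in>blocks p. even (card B)"
    and big_block: "\<exists>p\<in>C. \<exists>B\<in>blocks p. card B \<ge> 4"
    and no_mixed: "\<forall>p\<in>C. \<forall>B\<in>blocks p. \<not> (\<exists>u\<in>B. \<exists>v\<in>B. colour p u = X \<and> colour p v = Y)"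
  shows "free_product C"
proof -
  have "gen_cat inv_xy (mono_part C X \<union> mono_part C Y) \<subseteq> C"
    using gen_cat_subset[OF cat] by (auto simp: mono_part_def)
  then show ?thesis
    unfolding free_product_def
    using category_subset_generated[OF cat even_blocks no_mixed] by blast
qed

end
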